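(* There is an absolute constant $c>0$ such that the following holds. Let $0\le \varepsilon_1<\varepsilon_2\le 1$, let $n,m$ be positive integers with $m\ge c$. Suppose there exist real random variables $U,U'$ supported on an interval $[a,b]$ with $0\le a<b$ and $b-a\le \varepsilon_2^2/1000$, such that $\mathbb{E}[U]=\mathbb{E}[U']=1/n$, \[ \mathbb{E}\Big[\Big|U-\frac1n\Big|\Big]\le \frac{\varepsilon_1}{n},\qquad \mathbb{E}\Big[\Big|U'-\frac1n\Big|\Big]\ge \frac{\varepsilon_2}{n}, \] and \[ \operatorname{TV}\big(\mathbb{E}\,\mathrm{Poi}(mU),\ \mathbb{E}\,\mathrm{Poi}(mU')\big)\le \frac{1}{20n}. \] Then any tester which, for every unknown distribution $p$ over $[n]$, distinguishes between $\|p-\mathrm{Unif}_n\|_1\le 25\varepsilon_1$ and $\|p-\mathrm{Unif}_n\|_1\ge \varepsilon_2/2$ with probability at least $4/5$ requires at least $m/2$ samples from $p$.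
   Context: $\mathbb{E}\,\mathrm{Poi}(mU)$ denotes the mixture distribution on $\{0,1,2,\dots\}$ obtained by first drawing $U$ and then drawing a Poisson variable with mean $mU$. $\operatorname{TV}$ is total variation distance. $\mathrm{Unif}_n$ is the uniform distribution on $[n]$, $\|p-q\|_1=\sum_i|p_i-q_i|$. A tester receives i.i.d. samples from $p$ and must output "close" with probability $\ge4/5$ in the first case and "far" with probability $\ge4/5$ in the second. *)

theory Defs
  imports "HOL-Probability.Probability"
begin

text \<open>The Poisson
  pmf is written out explicitly so that rate 0 (U = 0) is allowed.\<close>
definition poi_mix :: "real measure \<Rightarrow> real \<Rightarrow> nat \<Rightarrow> real" where
  "poi_mix M m j = (\<integral>x. (m * x) ^ j / fact j * exp (- (m * x)) \<partial>M)"

definition tv_nat :: "(nat \<Rightarrow> real) \<Rightarrow> (nat \<Rightarrow> real) \<Rightarrow> real" where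
  "tv_nat q q' = (1/2) * (\<Sum>j. \<bar>q j - q' j\<bar>)"

definition l1_unif :: "nat \<Rightarrow> nat pmf \<Rightarrow> real" where
  "l1_unif n p = (\<Sum>i\<in>{1..n}. \<bar>pmf p i - 1 / real n\<bar>)"

definition tester_ok :: "nat \<Rightarrow> nat \<Rightarrow> (nat list \<Rightarrow> bool pmf) \<Rightarrow> real \<Rightarrow> real \<Rightarrow> bool" where
  "tester_ok n k T d1 d2 \<longleftrightarrow>
     (\<forall>p :: nat pmf. set_pmf p \<subseteq> {1..n} \<longrightarrow>
        (l1_unif n p \<le> d1 \<longrightarrow> measure_pmf.prob (bind_pmf (replicate_pmf k p) T) {True} \<ge> 4/5) \<and>
        (l1_unif n p \<ge> d2 \<longrightarrow> measure_pmf.prob (bind_pmf (replicate_pmf k p) T) {False} \<ge> 4/5))"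

end

theory Submission
  imports Defs "HOL-Combinatorics.Multiset_Permutations"
begin

text \<open>Poissonization. Draw \<open>U\<^sub>1, \<dots>, U\<^sub>n\<close> i.i.d. from \<open>M\<close> (or \<open>M'\<close>) and let \<open>p\<^sub>U\<close> be the
  normalized vector \<open>U\<^sub>i / \<Sum>\<^sub>j U\<^sub>j\<close>. Drawing \<open>Poi(m \<Sum>\<^sub>j U\<^sub>j)\<close> samples from \<open>p\<^sub>U\<close> produces
  independent counts \<open>Poi(m U\<^sub>i)\<close>, so after averaging over \<open>U\<close> the counts are \<open>n\<close> i.i.d.
  draws from \<open>E Poi(mU)\<close>, and the hypotheses on total variation make the two worlds
  \<open>1/10\<close>-indistinguishable. A \<open>k\<close>-sample tester with \<open>k < m/2\<close> can be run on the counts,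
  since with probability \<open>\<ge> 10/11\<close> at least \<open>k\<close> samples arrive. Under \<open>M\<close>, Markov's
  inequality makes \<open>p\<^sub>U\<close> \<open>25\<epsilon>\<^sub>1\<close>-close to uniform with probability \<open>4/5\<close>, so the tester
  accepts with probability \<open>\<ge> 32/55\<close>; under \<open>M'\<close>, a second-moment bound makes \<open>p\<^sub>U\<close>
  \<open>\<epsilon>\<^sub>2/2\<close>-far from uniform except with probability \<open>2/125\<close>, so it accepts with
  probability \<open>\<le> 27/125\<close>. As \<open>32/55 > 27/125 + 1/10\<close>, this is impossible. If \<open>\<epsilon>\<^sub>2/2 \<le> 25\<epsilon>\<^sub>1\<close>
  no tester exists at all.\<close>

section \<open>Poisson distributions\<close>

text \<open>Unlike the library's \<open>poisson_pmf\<close>, this is defined for every rate: a rate \<open>r \<le> 0\<close>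
  gives the point mass at 0.\<close>
definition poisson :: "real \<Rightarrow> nat pmf" where
  "poisson r = embed_pmf (\<lambda>j. exp (- max 0 r) * max 0 r ^ j / fact j)"

lemma exp_sums_real: "(\<lambda>n. (x::real) ^ n / fact n) sums exp x"
  using exp_converges[of x] by (simp add: real_scaleR_def field_simps)

lemma pmf_poisson_max: "pmf (poisson r) j = exp (- max 0 r) * max 0 r ^ j / fact j"
  unfolding poisson_def
proof (rule pmf_embed_pmf)
  have "(\<lambda>j. exp (- max 0 r) * (max 0 r ^ j / fact j)) sums (exp (- max 0 r) * exp (max 0 r))"
    by (rule sums_mult[OF exp_sums_real])
  then have "(\<lambda>j. exp (- max 0 r) * max 0 r ^ j / fact j) sums 1"
    by (simp add: exp_minus field_simps)
  then show "(\<integral>\<^sup>+j. ennreal (exp (- max 0 r) * max 0 r ^ j / fact j) \<partial>count_space UNIV) = 1"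
    by (simp add: nn_integral_count_space_nat suminf_ennreal2 sums_summable sums_unique[symmetric])
qed auto

text \<open>Chernoff bound: weight every term \<open>j < k\<close> by \<open>(3/2)^(k - j) \<ge> 1\<close>.\<close>
lemma poisson_lessThan_le:
  assumes r: "0 \<le> r"
  shows "measure_pmf.prob (poisson r) {..<k} \<le> (3/2) ^ k * exp (- r / 3)"
proof -
  have "measure_pmf.prob (poisson r) {..<k} = (\<Sum>j<k. exp (- r) * r ^ j / fact j)"
    using r by (simp add: measure_measure_pmf_finite pmf_poisson_max)
  also have "\<dots> \<le> (\<Sum>j<k. exp (- r) * r ^ j / fact j * (3/2) ^ (k - j))"
  proof (intro sum_mono)
    fix j
    have "exp (- r) * r ^ j / fact j * 1 \<le> exp (- r) * r ^ j / fact j * (3/2) ^ (k - j)"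
      using r by (intro mult_left_mono one_le_power) auto
    then show "exp (- r) * r ^ j / fact j \<le> exp (- r) * r ^ j / fact j * (3/2) ^ (k - j)"
      by simp
  qed
  also have "\<dots> = (3/2) ^ k * exp (- r) * (\<Sum>j<k. (2*r/3) ^ j / fact j)"
  proof -
    have "exp (- r) * r ^ j / fact j * (3/2) ^ (k - j) = (3/2) ^ k * exp (- r) * ((2*r/3) ^ j / fact j)"
      if "j < k" for j
    proof -
      have "(3/2::real) ^ k = (3/2) ^ (k - j) * (3/2) ^ j" using that
        by (simp flip: power_add)
      then show ?thesis by (simp add: power_mult_distrib power_divide field_simps)
    qed
    then show ?thesis by (simp add: sum_distrib_left del: times_divide_eq_left times_divide_eq_right)
  qed
  also have "\<dots> \<le> (3/2) ^ k * exp (- r) * exp (2*r/3)"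
    using r exp_sums_real[of "2*r/3"]
    by (intro mult_left_mono sum_le_suminf[where f="\<lambda>j. (2*r/3) ^ j / fact j",
          unfolded sums_unique[OF exp_sums_real, symmetric]]) (auto simp: sums_summable)
  also have "\<dots> = (3/2) ^ k * exp (- r / 3)"
    by (simp flip: exp_add)
  finally show ?thesis .
qed

lemma poisson_atLeast_ge:
  assumes "200 \<le> m" "real k < m / 2" "9/10 * m \<le> r"
  shows "10/11 \<le> measure_pmf.prob (poisson r) {k..}"
proof -
  have "(3/2::real) ^ k \<le> exp (1/2) ^ k"
    using exp_ge_add_one_self[of "1/2::real"] by (intro power_mono) auto
  also have "\<dots> = exp (real k / 2)" by (simp flip: exp_of_nat_mult)
  finally have "(3/2) ^ k * exp (- r / 3) \<le> exp (real k / 2) * exp (- r / 3)"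
    by (intro mult_right_mono) auto
  also have "\<dots> \<le> exp (- (m / 20))"
    unfolding exp_add[symmetric] using assms by (intro exp_mono) linarith
  also have "\<dots> \<le> 1/11"
  proof -
    have "11 \<le> 1 + m / 20" using assms by simp
    also have "\<dots> \<le> exp (m / 20)" by (rule exp_ge_add_one_self)
    finally show ?thesis by (simp add: exp_minus field_simps)
  qed
  finally have "measure_pmf.prob (poisson r) {..<k} \<le> 1/11"
    using poisson_lessThan_le[of r k] assms by linarith
  moreover have "measure_pmf.prob (poisson r) {k..} = 1 - measure_pmf.prob (poisson r) {..<k}"
    by (subst measure_pmf.prob_compl[symmetric]) (auto intro: arg_cong[where f="measure _"])
  ultimately show ?thesis by linarith
qed

section \<open>Poissonized testers\<close>

lemma pmf_replicate_pmf:
  "pmf (replicate_pmf N p) xs = (if length xs = N then prod_list (map (pmf p) xs) else 0)"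
proof (induction N arbitrary: xs)
  case 0
  then show ?case by (auto simp: pmf_return indicator_def)
next
  case (Suc N)
  have eq: "replicate_pmf (Suc N) p = map_pmf (\<lambda>(x,ys). x#ys) (pair_pmf p (replicate_pmf N p))"
    by (simp add: map_pmf_def pair_pmf_def bind_assoc_pmf bind_return_pmf)
  show ?case
  proof (cases xs)
    case Nil
    have "(\<lambda>(x,y). x#y) -` {[]} = ({} :: ('a \<times> 'a list) set)" by auto
    then show ?thesis unfolding eq using Nil by (auto simp: pmf_map)
  next
    case (Cons y ys)
    have "pmf (map_pmf (\<lambda>(x,ys). x#ys) (pair_pmf p (replicate_pmf N p))) (y#ys) =
          pmf (pair_pmf p (replicate_pmf N p)) (y, ys)"
      using pmf_map_inj'[of "\<lambda>(x,ys). x#ys" "pair_pmf p (replicate_pmf N p)" "(y,ys)"]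
      by (auto simp: inj_def)
    then show ?thesis unfolding eq using Cons Suc.IH by (simp add: pmf_pair)
  qed
qed

lemma pmf_replicate_pmf_mset_eq:
  assumes "mset xs = mset ys"
  shows "pmf (replicate_pmf N p) xs = pmf (replicate_pmf N p) ys"
proof -
  have "length xs = length ys" using assms by (metis size_mset)
  moreover have "prod_list (map (pmf p) xs) = prod_list (map (pmf p) ys)"
    using assms by (metis mset_map prod_mset_prod_list)
  ultimately show ?thesis by (simp add: pmf_replicate_pmf)
qed

lemma replicate_pmf_shuffle:
  "bind_pmf (replicate_pmf N p) (\<lambda>xs. pmf_of_set (permutations_of_multiset (mset xs))) = replicate_pmf N p"
proof (rule pmf_eqI)
  fix zs :: "'a list"
  let ?P = "permutations_of_multiset (mset zs)"
  have mem: "ys \<in> permutations_of_multiset A \<longleftrightarrow> mset ys = A" for ys A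
    by (simp add: permutations_of_multiset_def)
  have "pmf (bind_pmf (replicate_pmf N p) (\<lambda>xs. pmf_of_set (permutations_of_multiset (mset xs)))) zs
      = (\<integral>xs. indicator ?P xs / real (card ?P) \<partial>measure_pmf (replicate_pmf N p))"
    unfolding pmf_bind
    by (intro Bochner_Integration.integral_cong refl, rename_tac xs, case_tac "mset xs = mset zs")
       (auto simp: pmf_of_set indicator_def mem)
  also have "\<dots> = (\<Sum>xs\<in>?P. pmf (replicate_pmf N p) xs) / card ?P"
    by (simp add: measure_measure_pmf_finite)
  also have "\<dots> = (\<Sum>xs\<in>?P. pmf (replicate_pmf N p) zs) / card ?P"
    by (intro arg_cong2[where f="(/)"] sum.cong refl pmf_replicate_pmf_mset_eq) (auto simp: mem)
  finally show "pmf (bind_pmf (replicate_pmf N p) (\<lambda>xs. pmf_of_set (permutations_of_multiset (mset xs)))) zs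
      = pmf (replicate_pmf N p) zs"
    by (simp add: card_gt_0_iff)
qed

lemma map_take_replicate_pmf:
  assumes "k \<le> N"
  shows "map_pmf (take k) (replicate_pmf N p) = replicate_pmf k p"
proof -
  obtain r where N: "N = k + r" using assms le_Suc_ex by blast
  have "map_pmf (take k) (replicate_pmf (k + r) p) =
     replicate_pmf k p \<bind> (\<lambda>x. replicate_pmf r p \<bind> (\<lambda>_. return_pmf x))"
    unfolding replicate_pmf_distrib
    by (auto simp: map_bind_pmf map_return_pmf set_replicate_pmf intro!: bind_pmf_cong)
  then show ?thesis unfolding N by (simp add: bind_pmf_const bind_return_pmf')
qed

definition counts_mset :: "nat set \<Rightarrow> (nat \<Rightarrow> nat) \<Rightarrow> nat multiset" where
  "counts_mset I c = (\<Sum>i\<in>I. replicate_mset (c i) i)"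

lemma count_counts_mset: "finite I \<Longrightarrow> count (counts_mset I c) j = (if j \<in> I then c j else 0)"
  unfolding counts_mset_def by (induction I rule: finite_induct) auto

lemma prod_mset_counts_mset:
  "finite I \<Longrightarrow> prod_mset (image_mset f (counts_mset I c)) = (\<Prod>i\<in>I. f i ^ c i)"
  unfolding counts_mset_def by (induction I rule: finite_induct) auto

lemma size_counts_mset: "finite I \<Longrightarrow> size (counts_mset I c) = (\<Sum>i\<in>I. c i)"
  unfolding counts_mset_def by (induction I rule: finite_induct) auto

lemma set_mset_counts_mset: "finite I \<Longrightarrow> set_mset (counts_mset I c) = {i\<in>I. c i > 0}"
  using count_counts_mset[of I c] by (auto simp: set_mset_def)

lemma counts_mset_count_mset:
  assumes "finite I" "set xs \<subseteq> I"
  shows "counts_mset I (count (mset xs)) = mset xs"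
  using assms by (intro multiset_eqI) (auto simp: count_counts_mset count_eq_zero_iff)

lemma sum_count_mset:
  fixes I :: "nat set"
  assumes "finite I" "set xs \<subseteq> I"
  shows "(\<Sum>i\<in>I. count (mset xs) i) = length xs"
  using size_counts_mset[OF assms(1), of "count (mset xs)"] counts_mset_count_mset[OF assms] by simp

lemma card_permutations_counts_mset:
  assumes "finite I"
  shows "real (card (permutations_of_multiset (counts_mset I c))) =
           fact (\<Sum>i\<in>I. c i) / (\<Prod>i\<in>I. fact (c i))"
proof -
  let ?A = "counts_mset I c"
  have "(\<Prod>x\<in>set_mset ?A. fact (count ?A x)) = (\<Prod>i\<in>set_mset ?A. fact (c i) :: nat)"
    using assms by (intro prod.cong) (auto simp: set_mset_counts_mset count_counts_mset)
  also have "\<dots> = (\<Prod>i\<in>I. fact (c i))"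
    using assms by (intro prod.mono_neutral_left) (auto simp: set_mset_counts_mset)
  finally have "card (permutations_of_multiset ?A) * (\<Prod>i\<in>I. fact (c i)) = fact (\<Sum>i\<in>I. c i)"
    using card_permutations_of_multiset_aux[of ?A] assms by (simp add: size_counts_mset)
  then have "real (card (permutations_of_multiset ?A) * (\<Prod>i\<in>I. fact (c i))) = real (fact (\<Sum>i\<in>I. c i))"
    by (rule arg_cong)
  then have "real (card (permutations_of_multiset ?A)) * (\<Prod>i\<in>I. fact (c i)) = fact (\<Sum>i\<in>I. c i)"
    by (simp only: of_nat_mult of_nat_prod of_nat_fact)
  moreover have "(\<Prod>i\<in>I. fact (c i) :: real) > 0" by (intro prod_pos) auto
  ultimately show ?thesis by (simp add: eq_divide_eq)
qed

lemma pmf_count_mset_replicate_pmf: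
  fixes I :: "nat set"
  assumes fin: "finite I" and c: "\<forall>x. x \<notin> I \<longrightarrow> c x = 0"
  shows "pmf (map_pmf (count \<circ> mset) (replicate_pmf N p)) c =
           (if N = (\<Sum>i\<in>I. c i)
            then fact N / (\<Prod>i\<in>I. fact (c i)) * (\<Prod>i\<in>I. pmf p i ^ c i) else 0)"
proof -
  let ?A = "counts_mset I c"
  have "count ?A = c" using c fin by (auto simp: count_counts_mset fun_eq_iff)
  then have pre: "(count \<circ> mset) -` {c} = permutations_of_multiset ?A"
    by (auto simp: permutations_of_multiset_def multiset_eq_iff)
  have "pmf (replicate_pmf N p) xs = (if N = (\<Sum>i\<in>I. c i) then \<Prod>i\<in>I. pmf p i ^ c i else 0)"
    if "xs \<in> permutations_of_multiset ?A" for xs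
  proof -
    have m: "mset xs = ?A" using that by (simp add: permutations_of_multiset_def)
    then have "length xs = (\<Sum>i\<in>I. c i)" using fin by (metis size_counts_mset size_mset)
    moreover have "prod_list (map (pmf p) xs) = (\<Prod>i\<in>I. pmf p i ^ c i)"
      using m fin by (metis mset_map prod_mset_prod_list prod_mset_counts_mset)
    ultimately show ?thesis by (auto simp: pmf_replicate_pmf)
  qed
  then show ?thesis
    using fin by (simp add: pmf_map pre measure_measure_pmf_finite card_permutations_counts_mset)
qed

lemma Pi_pmf_poisson_split:
  fixes r :: "nat \<Rightarrow> real"
  assumes fin: "finite I" and S: "S = (\<Sum>i\<in>I. max 0 (r i))" "S > 0"
    and p: "\<And>i. pmf p i = (if i \<in> I then max 0 (r i) / S else 0)"
  shows "Pi_pmf I 0 (\<lambda>i. poisson (r i)) =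
           bind_pmf (poisson S) (\<lambda>N. map_pmf (count \<circ> mset) (replicate_pmf N p))"
proof (rule pmf_eqI)
  fix c :: "nat \<Rightarrow> nat"
  show "pmf (Pi_pmf I 0 (\<lambda>i. poisson (r i))) c =
        pmf (bind_pmf (poisson S) (\<lambda>N. map_pmf (count \<circ> mset) (replicate_pmf N p))) c"
  proof (cases "\<forall>x. x \<notin> I \<longrightarrow> c x = 0")
    case False
    have "set_pmf p \<subseteq> I" using p by (auto simp: set_pmf_iff split: if_splits)
    then have "pmf (map_pmf (count \<circ> mset) (replicate_pmf N p)) c = 0" for N
      using False by (auto simp: pmf_eq_0_set_pmf set_replicate_pmf count_eq_zero_iff)
    moreover have "pmf (Pi_pmf I 0 (\<lambda>i. poisson (r i))) c = 0"
      by (simp only: pmf_Pi[OF fin] if_not_P[OF False])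
    ultimately show ?thesis by (simp add: pmf_bind)
  next
    case True
    define N where "N = (\<Sum>i\<in>I. c i)"
    have "pmf (bind_pmf (poisson S) (\<lambda>N. map_pmf (count \<circ> mset) (replicate_pmf N p))) c =
          pmf (poisson S) N * (fact N / (\<Prod>i\<in>I. fact (c i)) * (\<Prod>i\<in>I. pmf p i ^ c i))"
      by (simp add: pmf_bind pmf_count_mset_replicate_pmf[OF fin True] N_def
          integral_measure_pmf_real[where A="{N}"] split: if_splits)
    also have "\<dots> = exp (- S) * (\<Prod>i\<in>I. max 0 (r i) ^ c i) / (\<Prod>i\<in>I. fact (c i))"
      using S(2) fin
      by (simp add: pmf_poisson_max p N_def power_divide prod_dividef power_sum)
    also have "exp (- S) = (\<Prod>i\<in>I. exp (- max 0 (r i)))"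
      unfolding S(1) using fin by (simp add: exp_sum sum_negf[symmetric])
    also have "(\<Prod>i\<in>I. exp (- max 0 (r i))) * (\<Prod>i\<in>I. max 0 (r i) ^ c i) / (\<Prod>i\<in>I. fact (c i)) =
               pmf (Pi_pmf I 0 (\<lambda>i. poisson (r i))) c"
      using True fin by (simp add: pmf_Pi pmf_poisson_max prod.distrib prod_dividef)
    finally show ?thesis unfolding comp_def by simp
  qed
qed

text \<open>Answering \<open>False\<close> when fewer than \<open>k\<close> samples arrive is an arbitrary convention: it
  only costs the factor \<open>P(Poi(S) \<ge> k)\<close> in the acceptance probability.\<close>
definition poissonized_test :: "nat set \<Rightarrow> nat \<Rightarrow> (nat list \<Rightarrow> bool pmf) \<Rightarrow> (nat \<Rightarrow> nat) \<Rightarrow> bool pmf" where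
  "poissonized_test I k T c =
     (if k \<le> (\<Sum>i\<in>I. c i)
      then bind_pmf (pmf_of_set (permutations_of_multiset (counts_mset I c))) (\<lambda>ys. T (take k ys))
      else return_pmf False)"

lemma poissonized_test_replicate_pmf:
  assumes fin: "finite I" and setp: "set_pmf p \<subseteq> I"
  shows "bind_pmf (replicate_pmf N p) (\<lambda>xs. poissonized_test I k T (count (mset xs))) =
           (if k \<le> N then bind_pmf (replicate_pmf k p) T else return_pmf False)"
proof -
  have "bind_pmf (replicate_pmf N p) (\<lambda>xs. poissonized_test I k T (count (mset xs))) =
        bind_pmf (replicate_pmf N p) (\<lambda>xs. if k \<le> N then
           bind_pmf (pmf_of_set (permutations_of_multiset (mset xs))) (\<lambda>ys. T (take k ys))
           else return_pmf False)"
  proof (intro bind_pmf_cong refl)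
    fix xs assume "xs \<in> set_pmf (replicate_pmf N p)"
    then have "set xs \<subseteq> I" "length xs = N" using setp by (auto simp: set_replicate_pmf)
    then show "poissonized_test I k T (count (mset xs)) = (if k \<le> N then
           bind_pmf (pmf_of_set (permutations_of_multiset (mset xs))) (\<lambda>ys. T (take k ys))
           else return_pmf False)"
      using fin by (simp add: poissonized_test_def sum_count_mset counts_mset_count_mset)
  qed
  also have "\<dots> = (if k \<le> N then bind_pmf (replicate_pmf k p) T else return_pmf False)"
  proof (cases "k \<le> N")
    case True
    have "bind_pmf (replicate_pmf N p) (\<lambda>xs.
           bind_pmf (pmf_of_set (permutations_of_multiset (mset xs))) (\<lambda>ys. T (take k ys))) =
          bind_pmf (bind_pmf (replicate_pmf N p) (\<lambda>xs. pmf_of_set (permutations_of_multiset (mset xs))))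
            (\<lambda>ys. T (take k ys))"
      by (simp add: bind_assoc_pmf)
    also have "\<dots> = bind_pmf (map_pmf (take k) (replicate_pmf N p)) T"
      by (simp add: replicate_pmf_shuffle bind_map_pmf o_def)
    finally show ?thesis using True by (simp add: map_take_replicate_pmf)
  qed (simp add: bind_pmf_const)
  finally show ?thesis .
qed

lemma pmf_poissonized_test_True:
  fixes r :: "nat \<Rightarrow> real"
  assumes fin: "finite I" and S: "S = (\<Sum>i\<in>I. max 0 (r i))" "S > 0"
    and p: "\<And>i. pmf p i = (if i \<in> I then max 0 (r i) / S else 0)"
  shows "pmf (bind_pmf (Pi_pmf I 0 (\<lambda>i. poisson (r i))) (poissonized_test I k T)) True =
         pmf (bind_pmf (replicate_pmf k p) T) True * measure_pmf.prob (poisson S) {k..}"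
proof -
  have "set_pmf p \<subseteq> I" using p by (auto simp: set_pmf_iff split: if_splits)
  then have "bind_pmf (Pi_pmf I 0 (\<lambda>i. poisson (r i))) (poissonized_test I k T) =
        bind_pmf (poisson S) (\<lambda>N. if k \<le> N then bind_pmf (replicate_pmf k p) T else return_pmf False)"
    unfolding Pi_pmf_poisson_split[OF fin S p]
    by (simp add: bind_assoc_pmf bind_map_pmf poissonized_test_replicate_pmf[OF fin] o_def)
  then have "pmf (bind_pmf (Pi_pmf I 0 (\<lambda>i. poisson (r i))) (poissonized_test I k T)) True =
     (\<integral>N. pmf (bind_pmf (replicate_pmf k p) T) True * indicator {k..} N \<partial>poisson S)"
    by (simp only: pmf_bind[of "poisson S"])
       (intro Bochner_Integration.integral_cong refl, auto simp: indicator_def pmf_return)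
  then show ?thesis by simp
qed

section \<open>Total variation\<close>

text \<open>A one-sided form of \<open>TV(P, Q) \<le> d\<close> that is stable under \<open>bind_pmf\<close>.\<close>
definition tv_le :: "'a pmf \<Rightarrow> 'a pmf \<Rightarrow> real \<Rightarrow> bool" where
  "tv_le P Q d \<longleftrightarrow> (\<forall>f::'a \<Rightarrow> ennreal. (\<forall>x. f x \<le> 1) \<longrightarrow>
       (\<integral>\<^sup>+x. f x \<partial>measure_pmf P) \<le> (\<integral>\<^sup>+x. f x \<partial>measure_pmf Q) + ennreal d)"

lemma tv_le_refl: "tv_le P P d"
  unfolding tv_le_def by (auto intro: add_increasing2)

lemma tv_le_mono: "tv_le P Q a \<Longrightarrow> a \<le> b \<Longrightarrow> tv_le P Q b"
  unfolding tv_le_def by (meson add_left_mono ennreal_leI order_trans)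

lemma nn_integral_pmf_le_1: "(\<And>x. f x \<le> 1) \<Longrightarrow> (\<integral>\<^sup>+x. f x \<partial>measure_pmf P) \<le> 1"
  using nn_integral_mono[of "measure_pmf P" f "\<lambda>_. 1"] by simp

lemma tv_le_bind:
  assumes PQ: "tv_le P Q a" and K: "\<And>x. tv_le (K x) (K' x) b" and "0 \<le> a" "0 \<le> b"
  shows "tv_le (bind_pmf P K) (bind_pmf Q K') (a + b)"
  unfolding tv_le_def
proof (intro allI impI)
  fix f :: "'b \<Rightarrow> ennreal" assume f: "\<forall>x. f x \<le> 1"
  have "(\<integral>\<^sup>+x. f x \<partial>bind_pmf P K) = (\<integral>\<^sup>+x. \<integral>\<^sup>+y. f y \<partial>K x \<partial>P)" by simp
  also have "\<dots> \<le> (\<integral>\<^sup>+x. (\<integral>\<^sup>+y. f y \<partial>K' x) + ennreal b \<partial>P)"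
    using K f unfolding tv_le_def by (intro nn_integral_mono) auto
  also have "\<dots> = (\<integral>\<^sup>+x. (\<integral>\<^sup>+y. f y \<partial>K' x) \<partial>P) + ennreal b"
    by (subst nn_integral_add) (auto simp: measure_pmf.emeasure_space_1)
  also have "(\<integral>\<^sup>+x. (\<integral>\<^sup>+y. f y \<partial>K' x) \<partial>P) \<le> (\<integral>\<^sup>+x. (\<integral>\<^sup>+y. f y \<partial>K' x) \<partial>Q) + ennreal a"
    using f by (intro PQ[unfolded tv_le_def, rule_format] nn_integral_pmf_le_1) auto
  also have "(\<integral>\<^sup>+x. (\<integral>\<^sup>+y. f y \<partial>K' x) \<partial>Q) = (\<integral>\<^sup>+x. f x \<partial>bind_pmf Q K')" by simp
  finally show "(\<integral>\<^sup>+x. f x \<partial>bind_pmf P K) \<le> (\<integral>\<^sup>+x. f x \<partial>bind_pmf Q K') + ennreal (a + b)"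
    using assms(3,4) by (simp add: ennreal_plus add.assoc add_right_mono)
qed

lemma tv_le_Pi_pmf:
  assumes "finite A" "\<And>i. i \<in> A \<Longrightarrow> tv_le (q i) (q' i) d" "0 \<le> d"
  shows "tv_le (Pi_pmf A dflt q) (Pi_pmf A dflt q') (real (card A) * d)"
  using assms
proof (induction A rule: finite_induct)
  case empty
  then show ?case by (simp add: tv_le_refl)
next
  case (insert x A)
  then have IH: "tv_le (Pi_pmf A dflt q) (Pi_pmf A dflt q') (real (card A) * d)" by simp
  have inner: "tv_le (bind_pmf (Pi_pmf A dflt q) (\<lambda>f. return_pmf (f(x:=y))))
          (bind_pmf (Pi_pmf A dflt q') (\<lambda>f. return_pmf (f(x:=y)))) (real (card A) * d + 0)" for y
    using insert by (intro tv_le_bind[OF IH]) (auto simp: tv_le_refl)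
  have "tv_le (bind_pmf (q x) (\<lambda>y. bind_pmf (Pi_pmf A dflt q) (\<lambda>f. return_pmf (f(x:=y)))))
               (bind_pmf (q' x) (\<lambda>y. bind_pmf (Pi_pmf A dflt q') (\<lambda>f. return_pmf (f(x:=y)))))
               (d + (real (card A) * d + 0))"
    by (rule tv_le_bind) (use insert inner in auto)
  then show ?case using insert by (simp add: Pi_pmf_insert' algebra_simps)
qed

lemma summable_pmf_nat: "summable (pmf q)" for q :: "nat pmf"
proof -
  have "(\<integral>\<^sup>+ j. ennreal (pmf q j) \<partial>count_space UNIV) = 1"
    by (simp add: nn_integral_pmf measure_pmf.emeasure_space_1[simplified])
  then have "(\<Sum>j. ennreal (pmf q j)) \<noteq> \<top>" by (simp add: nn_integral_count_space_nat)
  then show ?thesis by (intro summable_suminf_not_top) auto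
qed

lemma summable_abs_pmf_diff: "summable (\<lambda>j. \<bar>pmf q j - pmf q' j\<bar>)" for q q' :: "nat pmf"
  by (rule summable_comparison_test[OF _ summable_add[OF summable_pmf_nat[of q] summable_pmf_nat[of q']]])
     (auto intro!: exI[of _ 0] simp: abs_le_iff add_increasing add_increasing2)

lemma tv_le_l1:
  fixes q q' :: "nat pmf"
  shows "tv_le q q' (\<Sum>j. \<bar>pmf q j - pmf q' j\<bar>)"
  unfolding tv_le_def
proof (intro allI impI)
  fix f :: "nat \<Rightarrow> ennreal" assume f: "\<forall>x. f x \<le> 1"
  have pw: "ennreal (pmf q j) * f j \<le> ennreal (pmf q' j) * f j + ennreal \<bar>pmf q j - pmf q' j\<bar>" for j
  proof -
    have "ennreal (pmf q j) * f j \<le> (ennreal (pmf q' j) + ennreal \<bar>pmf q j - pmf q' j\<bar>) * f j"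
      by (intro mult_right_mono) (auto simp flip: ennreal_plus)
    also have "\<dots> = ennreal (pmf q' j) * f j + ennreal \<bar>pmf q j - pmf q' j\<bar> * f j"
      by (simp add: distrib_right)
    also have "ennreal \<bar>pmf q j - pmf q' j\<bar> * f j \<le> ennreal \<bar>pmf q j - pmf q' j\<bar> * 1"
      using f by (intro mult_left_mono) auto
    finally show ?thesis by (simp add: add_left_mono)
  qed
  have "(\<integral>\<^sup>+x. f x \<partial>q) \<le> (\<integral>\<^sup>+j. ennreal (pmf q' j) * f j + ennreal \<bar>pmf q j - pmf q' j\<bar> \<partial>count_space UNIV)"
    unfolding nn_integral_measure_pmf by (intro nn_integral_mono pw)
  also have "\<dots> = (\<integral>\<^sup>+j. ennreal (pmf q' j) * f j \<partial>count_space UNIV) +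
                  (\<integral>\<^sup>+j. ennreal \<bar>pmf q j - pmf q' j\<bar> \<partial>count_space UNIV)"
    by (rule nn_integral_add) auto
  also have "\<dots> = (\<integral>\<^sup>+x. f x \<partial>q') + ennreal (\<Sum>j. \<bar>pmf q j - pmf q' j\<bar>)"
    by (simp add: nn_integral_measure_pmf nn_integral_count_space_nat suminf_ennreal2
          summable_abs_pmf_diff)
  finally show "(\<integral>\<^sup>+x. f x \<partial>q) \<le> (\<integral>\<^sup>+x. f x \<partial>q') + ennreal (\<Sum>j. \<bar>pmf q j - pmf q' j\<bar>)" .
qed

lemma tv_le_pmf_bind:
  assumes "tv_le P Q d" "0 \<le> d"
  shows "pmf (bind_pmf P K) x \<le> pmf (bind_pmf Q K) x + d"
proof -
  have "ennreal (pmf (bind_pmf P K) x) \<le> ennreal (pmf (bind_pmf Q K) x) + ennreal d"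
    using assms(1) unfolding tv_le_def ennreal_pmf_bind by (auto simp: pmf_le_1)
  then show ?thesis
    using assms(2) by (simp flip: ennreal_plus)
qed

lemma tv_le_Pi_pmf_l1:
  fixes q q' :: "nat pmf"
  assumes "finite A"
  shows "tv_le (Pi_pmf A dflt (\<lambda>_. q)) (Pi_pmf A dflt (\<lambda>_. q'))
           (card A * (\<Sum>j. \<bar>pmf q j - pmf q' j\<bar>))"
  using assms tv_le_l1 summable_abs_pmf_diff by (intro tv_le_Pi_pmf suminf_nonneg) auto

lemma ennreal_integral_le_nn_integral:
  fixes g :: "'a \<Rightarrow> real"
  assumes "integrable M g"
  shows "ennreal (\<integral>x. g x \<partial>M) \<le> (\<integral>\<^sup>+x. ennreal (g x) \<partial>M)"
proof -
  have "ennreal (\<integral>x. g x \<partial>M) \<le> ennreal (\<integral>x. max 0 (g x) \<partial>M)"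
    using assms by (intro ennreal_leI integral_mono) auto
  also have "\<dots> = (\<integral>\<^sup>+x. ennreal (max 0 (g x)) \<partial>M)"
    using assms by (intro nn_integral_eq_integral[symmetric]) auto
  also have "\<dots> = (\<integral>\<^sup>+x. ennreal (g x) \<partial>M)"
    by (intro nn_integral_cong) (auto simp: max_def ennreal_neg)
  finally show ?thesis .
qed

text \<open>The linear minorant \<open>c (1 - X/\<beta>)\<close> of \<open>\<phi>\<close> avoids any measurability assumption on \<open>\<phi>\<close>.\<close>
lemma (in prob_space) nn_integral_ge_by_first_moment:
  fixes X \<phi> :: "'a \<Rightarrow> real"
  assumes X: "integrable M X" "\<And>x. 0 \<le> X x" and EX: "(\<integral>x. X x \<partial>M) \<le> \<delta> * \<beta>"
    and "0 \<le> \<beta>" "0 \<le> \<delta>" "0 \<le> c" and \<phi>: "\<And>x. X x \<le> \<beta> \<Longrightarrow> c \<le> \<phi> x"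
  shows "ennreal (c * (1 - \<delta>)) \<le> (\<integral>\<^sup>+x. ennreal (\<phi> x) \<partial>M)"
proof (cases "\<beta> = 0")
  case True
  have "0 \<le> (\<integral>x. X x \<partial>M)"
    using X(2) by (simp add: Bochner_Integration.integral_nonneg)
  then have "(\<integral>x. X x \<partial>M) = 0"
    using EX True by simp
  then have "AE x in M. X x = 0"
    using integral_nonneg_eq_0_iff_AE[OF X(1)] X(2) by auto
  then have "AE x in M. ennreal c \<le> ennreal (\<phi> x)"
    by eventually_elim (use True \<phi> in \<open>auto intro: ennreal_leI\<close>)
  then have "(\<integral>\<^sup>+x. ennreal c \<partial>M) \<le> (\<integral>\<^sup>+x. ennreal (\<phi> x) \<partial>M)"
    by (rule nn_integral_mono_AE)
  moreover have "ennreal (c * (1 - \<delta>)) \<le> ennreal c"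
    using assms by (intro ennreal_leI) (simp add: mult_left_le)
  ultimately show ?thesis by (simp add: emeasure_space_1)
next
  case False
  with assms have "0 < \<beta>" by simp
  define g where "g x = c * (1 - X x / \<beta>)" for x
  have "c * (1 - \<delta>) \<le> (\<integral>x. g x \<partial>M)"
    using EX \<open>0 < \<beta>\<close> \<open>0 \<le> c\<close> X(1)
    by (simp add: g_def prob_space mult_left_mono divide_le_eq)
  then have "ennreal (c * (1 - \<delta>)) \<le> ennreal (\<integral>x. g x \<partial>M)"
    by (rule ennreal_leI)
  also have "\<dots> \<le> (\<integral>\<^sup>+x. ennreal (g x) \<partial>M)"
    using X(1) by (intro ennreal_integral_le_nn_integral) (simp add: g_def)
  also have "\<dots> \<le> (\<integral>\<^sup>+x. ennreal (\<phi> x) \<partial>M)"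
  proof (intro nn_integral_mono)
    fix x
    show "ennreal (g x) \<le> ennreal (\<phi> x)"
    proof (cases "X x \<le> \<beta>")
      case True
      then have "g x \<le> c" using X(2)[of x] \<open>0 < \<beta>\<close> \<open>0 \<le> c\<close> by (simp add: g_def mult_left_le)
      then show ?thesis using \<phi>[OF True] by (intro ennreal_leI) simp
    next
      case False
      then have "g x \<le> 0" using \<open>0 < \<beta>\<close> \<open>0 \<le> c\<close> by (simp add: g_def mult_nonneg_nonpos)
      then show ?thesis by (simp add: ennreal_neg)
    qed
  qed
  finally show ?thesis .
qed

lemma sum_abs_normalize_diff_le:
  fixes v :: "'a \<Rightarrow> real"
  assumes "\<And>i. i \<in> I \<Longrightarrow> 0 \<le> v i" "V = (\<Sum>i\<in>I. v i)" "0 < V"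
  shows "\<bar>(\<Sum>i\<in>I. \<bar>v i / V - c\<bar>) - (\<Sum>i\<in>I. \<bar>v i - c\<bar>)\<bar> \<le> \<bar>1 - V\<bar>"
proof -
  have "\<bar>(\<Sum>i\<in>I. \<bar>v i / V - c\<bar>) - (\<Sum>i\<in>I. \<bar>v i - c\<bar>)\<bar> \<le> (\<Sum>i\<in>I. \<bar>\<bar>v i / V - c\<bar> - \<bar>v i - c\<bar>\<bar>)"
    by (simp add: sum_subtractf[symmetric] sum_abs)
  also have "\<dots> \<le> (\<Sum>i\<in>I. v i * (\<bar>1 - V\<bar> / V))"
  proof (intro sum_mono)
    fix i assume "i \<in> I"
    have "\<bar>\<bar>v i / V - c\<bar> - \<bar>v i - c\<bar>\<bar> \<le> \<bar>v i / V - v i\<bar>" by linarith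
    also have "v i / V - v i = v i * ((1 - V) / V)" using assms(3) by (simp add: field_simps)
    also have "\<bar>v i * ((1 - V) / V)\<bar> = v i * (\<bar>1 - V\<bar> / V)"
      using assms(1)[OF \<open>i \<in> I\<close>] assms(3) by (simp add: abs_mult)
    finally show "\<bar>\<bar>v i / V - c\<bar> - \<bar>v i - c\<bar>\<bar> \<le> v i * (\<bar>1 - V\<bar> / V)" .
  qed
  also have "\<dots> = V * (\<bar>1 - V\<bar> / V)"
    unfolding assms(2) by (rule sum_distrib_right[symmetric])
  also have "\<dots> = \<bar>1 - V\<bar>"
    using assms(3) by simp
  finally show ?thesis .
qed

lemma square_lt_8_sum_squares:
  fixes s y z :: real
  assumes "0 < s" "s / 2 < \<bar>y\<bar> + \<bar>z\<bar>"
  shows "s^2 < 8 * (y^2 + z^2)"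
proof -
  have "(s / 2)^2 < (\<bar>y\<bar> + \<bar>z\<bar>)^2"
    using assms by (intro power_strict_mono) auto
  also have "\<dots> \<le> 2 * (y^2 + z^2)"
    using zero_le_power2[of "\<bar>y\<bar> - \<bar>z\<bar>"] by (simp add: power2_eq_square algebra_simps)
  finally show ?thesis by (simp add: power2_eq_square)
qed

section \<open>Mixtures of Poisson distributions\<close>

locale iid_real =
  fixes M :: "real measure" and I :: "nat set"
  assumes prob_space_M: "prob_space M" and sets_M: "sets M = sets borel" and finite_I: "finite I"
begin

lemma borel_measurable_M:
  "f \<in> borel_measurable borel \<Longrightarrow> f \<in> borel_measurable M"
  by (simp add: measurable_cong_sets[OF sets_M refl])

sublocale product_prob_space "\<lambda>_. M" I
  unfolding product_prob_space_def product_prob_space_axioms_def product_sigma_finite_def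
  using prob_space_M by (auto intro: prob_space_imp_sigma_finite)

abbreviation iid :: "(nat \<Rightarrow> real) measure" where
  "iid \<equiv> PiM I (\<lambda>_. M)"

lemma measurable_component_comp:
  assumes "g \<in> borel_measurable borel" "i \<in> I"
  shows "(\<lambda>u. g (u i)) \<in> borel_measurable iid"
  by (rule measurable_compose[OF measurable_component_singleton[OF assms(2)] borel_measurable_M[OF assms(1)]])

lemma integral_component:
  fixes g :: "real \<Rightarrow> real"
  assumes "i \<in> I" "g \<in> borel_measurable borel"
  shows "(\<integral>u. g (u i) \<partial>iid) = (\<integral>x. g x \<partial>M)"
  using integral_distr[OF measurable_component_singleton[OF assms(1)] borel_measurable_M[OF assms(2)]]
    PiM_component[OF assms(1)] by simp

lemma integrable_M_bounded:
  fixes f :: "real \<Rightarrow> real"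
  shows "f \<in> borel_measurable borel \<Longrightarrow> (\<And>x. \<bar>f x\<bar> \<le> B) \<Longrightarrow> integrable M f"
  by (intro M.integrable_const_bound[where B=B] borel_measurable_M) auto

lemma integrable_iid_bounded:
  fixes f :: "(nat \<Rightarrow> real) \<Rightarrow> real"
  shows "f \<in> borel_measurable iid \<Longrightarrow> (\<And>u. \<bar>f u\<bar> \<le> B) \<Longrightarrow> integrable iid f"
  by (intro P.integrable_const_bound[where B=B]) auto

lemma
  fixes g :: "real \<Rightarrow> real"
  assumes g: "g \<in> borel_measurable borel" and gB: "\<And>x. \<bar>g x\<bar> \<le> B"
  shows integrable_sum_components: "integrable iid (\<lambda>u. \<Sum>i\<in>I. g (u i))"
    and integrable_square_sum_components: "integrable iid (\<lambda>u. (\<Sum>i\<in>I. g (u i))^2)"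
    and integral_sum_components: "(\<integral>u. (\<Sum>i\<in>I. g (u i)) \<partial>iid) = card I * (\<integral>x. g x \<partial>M)"
proof -
  have meas: "(\<lambda>u. \<Sum>i\<in>I. g (u i)) \<in> borel_measurable iid"
    using g by (intro borel_measurable_sum measurable_component_comp)
  have bound: "\<bar>\<Sum>i\<in>I. g (u i)\<bar> \<le> card I * B" for u
    using order_trans[OF sum_abs sum_mono[of I "\<lambda>i. \<bar>g (u i)\<bar>" "\<lambda>_. B"]] gB by simp
  show "integrable iid (\<lambda>u. \<Sum>i\<in>I. g (u i))"
    by (rule integrable_iid_bounded[OF meas bound])
  show "integrable iid (\<lambda>u. (\<Sum>i\<in>I. g (u i))^2)"
  proof (rule integrable_iid_bounded[where B="(card I * B)^2"])
    show "(\<lambda>u. (\<Sum>i\<in>I. g (u i))^2) \<in> borel_measurable iid" using meas by measurable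
    show "\<bar>(\<Sum>i\<in>I. g (u i))^2\<bar> \<le> (card I * B)^2" for u
      using power_mono[OF bound[of u], of 2] by simp
  qed
  have "(\<integral>u. (\<Sum>i\<in>I. g (u i)) \<partial>iid) = (\<Sum>i\<in>I. (\<integral>u. g (u i) \<partial>iid))"
    using g gB by (intro Bochner_Integration.integral_sum integrable_iid_bounded measurable_component_comp)
  also have "\<dots> = (\<Sum>i\<in>I. (\<integral>x. g x \<partial>M))" by (intro sum.cong refl integral_component g)
  finally show "(\<integral>u. (\<Sum>i\<in>I. g (u i)) \<partial>iid) = card I * (\<integral>x. g x \<partial>M)" by simp
qed

lemma integral_mult_distinct_components:
  fixes g h :: "real \<Rightarrow> real"
  assumes "i \<in> I" "j \<in> I" "i \<noteq> j"
    and g: "g \<in> borel_measurable borel" "\<And>x. \<bar>g x\<bar> \<le> B"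
    and h: "h \<in> borel_measurable borel" "\<And>x. \<bar>h x\<bar> \<le> B"
  shows "(\<integral>u. g (u i) * h (u j) \<partial>iid) = (\<integral>x. g x \<partial>M) * (\<integral>x. h x \<partial>M)"
proof -
  define f where "f = (\<lambda>l::nat. if l = i then g else if l = j then h else (\<lambda>_::real. 1::real))"
  have "(\<Prod>l\<in>I. f l (u l)) = (\<Prod>l\<in>{i,j}. f l (u l))" for u
    using assms(1,2) finite_I by (intro prod.mono_neutral_right) (auto simp: f_def)
  then have "(\<integral>u. g (u i) * h (u j) \<partial>iid) = (\<integral>u. (\<Prod>l\<in>I. f l (u l)) \<partial>iid)"
    using assms(3) by (simp add: f_def)
  also have "\<dots> = (\<Prod>l\<in>I. (\<integral>x. f l x \<partial>M))"
    using g h by (intro product_integral_prod finite_I) (auto simp: f_def intro!: integrable_M_bounded)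
  also have "\<dots> = (\<Prod>l\<in>{i,j}. (\<integral>x. f l x \<partial>M))"
    using assms(1,2) finite_I by (intro prod.mono_neutral_right) (auto simp: f_def M.prob_space)
  finally show ?thesis
    using assms(3) by (simp add: f_def)
qed

lemma integral_square_sum_centred:
  fixes g :: "real \<Rightarrow> real"
  assumes g[measurable]: "g \<in> borel_measurable borel" and gB: "\<And>x. \<bar>g x\<bar> \<le> B"
    and g0: "(\<integral>x. g x \<partial>M) = 0"
  shows "(\<integral>u. (\<Sum>i\<in>I. g (u i))^2 \<partial>iid) = card I * (\<integral>x. (g x)^2 \<partial>M)"
proof -
  have "0 \<le> B" using gB[of 0] by linarith
  then have int: "integrable iid (\<lambda>u. g (u i) * g (u j))" if "i \<in> I" "j \<in> I" for i j
    using that gB by (intro integrable_iid_bounded[where B="B*B"])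
      (auto intro!: borel_measurable_times measurable_component_comp simp: abs_mult mult_mono)
  have "(\<integral>u. g (u i) * g (u j) \<partial>iid) = (if i = j then (\<integral>x. (g x)^2 \<partial>M) else 0)"
    if "i \<in> I" "j \<in> I" for i j
    using that integral_component[OF that(1), of "\<lambda>x. (g x)^2"] gB
      integral_mult_distinct_components[OF that _ g gB g gB]
    by (cases "i = j") (simp_all add: power2_eq_square g0)
  then have "(\<Sum>i\<in>I. \<Sum>j\<in>I. (\<integral>u. g (u i) * g (u j) \<partial>iid)) = card I * (\<integral>x. (g x)^2 \<partial>M)"
    using finite_I by simp
  moreover have "(\<integral>u. (\<Sum>i\<in>I. g (u i))^2 \<partial>iid) = (\<Sum>i\<in>I. \<Sum>j\<in>I. (\<integral>u. g (u i) * g (u j) \<partial>iid))"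
    using int by (simp add: power2_eq_square sum_product integral_sum)
  ultimately show ?thesis by simp
qed

end

locale poisson_mixture = iid_real +
  fixes a b r :: real
  assumes AE_in_ab: "AE x in M. x \<in> {a..b}" and nonneg_a: "0 \<le> a" and a_le_b: "a \<le> b"
    and nonneg_r: "0 \<le> r"
begin

text \<open>Clamping changes \<open>M\<close>-almost nothing but lets bounds hold everywhere, not only a.e.\<close>
definition clamp :: "real \<Rightarrow> real" where
  "clamp x = max a (min b x)"

definition mix_pmf :: "nat pmf" where
  "mix_pmf = embed_pmf (poi_mix M r)"

definition poisson_counts :: "(nat \<Rightarrow> real) \<Rightarrow> (nat \<Rightarrow> nat) pmf" where
  "poisson_counts u = Pi_pmf I 0 (\<lambda>i. poisson (r * clamp (u i)))"

lemma clamp_bounds: "a \<le> clamp x" "clamp x \<le> b"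
  using a_le_b by (auto simp: clamp_def)

lemma clamp_nonneg: "0 \<le> clamp x"
  using clamp_bounds(1)[of x] nonneg_a by linarith

lemma AE_clamp_eq: "AE x in M. clamp x = x"
  using AE_in_ab by eventually_elim (auto simp: clamp_def)

lemma borel_measurable_clamp[measurable]: "clamp \<in> borel_measurable borel"
  unfolding clamp_def by measurable

lemma integral_comp_clamp:
  fixes f :: "real \<Rightarrow> real"
  assumes "f \<in> borel_measurable borel"
  shows "(\<integral>x. f (clamp x) \<partial>M) = (\<integral>x. f x \<partial>M)"
  using AE_clamp_eq assms
  by (intro integral_cong_AE borel_measurable_M) (auto elim: eventually_mono)

lemma integral_clamp: "(\<integral>x. clamp x \<partial>M) = (\<integral>x. x \<partial>M)"
  using integral_comp_clamp[of "\<lambda>x. x"] by simp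

lemma integrable_clamp: "integrable M clamp"
  using clamp_bounds clamp_nonneg by (intro integrable_M_bounded[where B=b]) auto

lemma mean_in_ab: "(\<integral>x. x \<partial>M) \<in> {a..b}"
proof -
  have "(\<integral>x. a \<partial>M) \<le> (\<integral>x. clamp x \<partial>M)" "(\<integral>x. clamp x \<partial>M) \<le> (\<integral>x. b \<partial>M)"
    using integrable_clamp clamp_bounds by (intro integral_mono; simp)+
  then show ?thesis by (simp add: integral_clamp M.prob_space)
qed

lemma borel_measurable_pmf_poisson_clamp[measurable]:
  "(\<lambda>x. pmf (poisson (r * clamp x)) j) \<in> borel_measurable borel"
  unfolding pmf_poisson_max by measurable

lemma poi_mix_eq_integral: "poi_mix M r j = (\<integral>x. pmf (poisson (r * clamp x)) j \<partial>M)"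
  unfolding poi_mix_def
proof (rule integral_cong_AE)
  show "AE x in M. (r * x) ^ j / fact j * exp (- (r * x)) = pmf (poisson (r * clamp x)) j"
    using AE_clamp_eq AE_in_ab
  proof eventually_elim
    case (elim x)
    then have "max 0 (r * clamp x) = r * x" using nonneg_r nonneg_a by simp
    then show ?case using elim by (simp add: pmf_poisson_max)
  qed
qed (auto intro: borel_measurable_M)

lemma ennreal_poi_mix:
  "ennreal (poi_mix M r j) = (\<integral>\<^sup>+x. ennreal (pmf (poisson (r * clamp x)) j) \<partial>M)"
  unfolding poi_mix_eq_integral
  by (rule nn_integral_eq_integral[symmetric])
     (auto intro!: integrable_M_bounded[where B=1] simp: pmf_le_1)

lemma poi_mix_nonneg: "0 \<le> poi_mix M r j"
  unfolding poi_mix_eq_integral by (intro Bochner_Integration.integral_nonneg) auto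

lemma pmf_mix_pmf: "pmf mix_pmf j = poi_mix M r j"
  unfolding mix_pmf_def
proof (rule pmf_embed_pmf)
  have "(\<integral>\<^sup>+ j. ennreal (poi_mix M r j) \<partial>count_space UNIV) =
        (\<integral>\<^sup>+x. \<integral>\<^sup>+ j. ennreal (pmf (poisson (r * clamp x)) j) \<partial>count_space UNIV \<partial>M)"
    unfolding ennreal_poi_mix
    by (rule nn_integral_count_space_nn_integral[symmetric]) (auto intro: borel_measurable_M)
  also have "\<dots> = 1"
    by (simp add: nn_integral_pmf M.emeasure_space_1)
  finally show "(\<integral>\<^sup>+ j. ennreal (poi_mix M r j) \<partial>count_space UNIV) = 1" .
qed (rule poi_mix_nonneg)

lemma pmf_Pi_pmf_eq_0:
  "\<not> (\<forall>x. x \<notin> I \<longrightarrow> c x = 0) \<Longrightarrow> pmf (Pi_pmf I 0 q) c = 0"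
  by (simp only: pmf_Pi[OF finite_I] if_False)

lemma borel_measurable_pmf_poisson_counts:
  "(\<lambda>u. ennreal (pmf (poisson_counts u) c)) \<in> borel_measurable iid"
proof -
  have "(\<lambda>u. \<Prod>i\<in>I. pmf (poisson (r * clamp (u i))) (c i)) \<in> borel_measurable iid"
    by (intro borel_measurable_prod measurable_component_comp) auto
  then show ?thesis by (simp add: poisson_counts_def pmf_Pi[OF finite_I])
qed

lemma nn_integral_Pi_pmf_mix_pmf:
  "(\<integral>\<^sup>+c. h c \<partial>Pi_pmf I 0 (\<lambda>_. mix_pmf)) = (\<integral>\<^sup>+u. (\<integral>\<^sup>+c. h c \<partial>poisson_counts u) \<partial>iid)"
proof -
  define C where "C = {c::nat\<Rightarrow>nat. \<forall>x. x \<notin> I \<longrightarrow> c x = 0}"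
  have "C = (\<lambda>h x. if x \<in> I then h x else 0) ` PiE I (\<lambda>_. UNIV)"
    using dflt_image_PiE[of I 0 "\<lambda>_. UNIV::nat set"] by (simp add: PiE_dflt_def C_def)
  then have "countable C" using finite_I by (auto intro!: countable_image countable_PiE)
  have restrict: "(\<integral>\<^sup>+c. h c \<partial>Q) = (\<integral>\<^sup>+c. ennreal (pmf Q c) * h c \<partial>count_space C)"
    if "\<And>c. c \<notin> C \<Longrightarrow> pmf Q c = 0" for Q
    unfolding nn_integral_measure_pmf
    by (subst nn_integral_count_space_indicator) (auto intro!: nn_integral_cong simp: indicator_def that)
  have pmf_Pi: "ennreal (pmf (Pi_pmf I 0 (\<lambda>_. mix_pmf)) c) = (\<integral>\<^sup>+u. ennreal (pmf (poisson_counts u) c) \<partial>iid)"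
    if "c \<in> C" for c
  proof -
    have "ennreal (pmf (Pi_pmf I 0 (\<lambda>_. mix_pmf)) c) = (\<Prod>i\<in>I. ennreal (poi_mix M r (c i)))"
      using that finite_I by (simp add: pmf_Pi C_def pmf_mix_pmf prod_ennreal poi_mix_nonneg)
    also have "\<dots> = (\<integral>\<^sup>+u. (\<Prod>i\<in>I. ennreal (pmf (poisson (r * clamp (u i))) (c i))) \<partial>iid)"
      unfolding ennreal_poi_mix
      by (rule product_nn_integral_prod[symmetric]) (auto intro: finite_I borel_measurable_M)
    also have "\<dots> = (\<integral>\<^sup>+u. ennreal (pmf (poisson_counts u) c) \<partial>iid)"
      using that finite_I by (intro nn_integral_cong) (simp add: poisson_counts_def pmf_Pi C_def prod_ennreal)
    finally show ?thesis .
  qed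
  have "(\<integral>\<^sup>+c. h c \<partial>Pi_pmf I 0 (\<lambda>_. mix_pmf)) =
        (\<integral>\<^sup>+c. (\<integral>\<^sup>+u. ennreal (pmf (poisson_counts u) c) * h c \<partial>iid) \<partial>count_space C)"
    by (subst restrict) (auto simp: C_def pmf_Pi_pmf_eq_0 pmf_Pi nn_integral_multc
          borel_measurable_pmf_poisson_counts intro!: nn_integral_cong)
  also have "\<dots> = (\<integral>\<^sup>+u. (\<integral>\<^sup>+c. ennreal (pmf (poisson_counts u) c) * h c \<partial>count_space C) \<partial>iid)"
    by (rule nn_integral_count_space_nn_integral[symmetric])
      (use \<open>countable C\<close> borel_measurable_pmf_poisson_counts in auto)
  also have "\<dots> = (\<integral>\<^sup>+u. (\<integral>\<^sup>+c. h c \<partial>poisson_counts u) \<partial>iid)"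
    by (intro nn_integral_cong restrict[symmetric]) (auto simp: C_def poisson_counts_def pmf_Pi_pmf_eq_0)
  finally show ?thesis .
qed

definition mass :: "(nat \<Rightarrow> real) \<Rightarrow> real" where
  "mass u = (\<Sum>i\<in>I. clamp (u i))"

definition normalized :: "(nat \<Rightarrow> real) \<Rightarrow> nat pmf" where
  "normalized u = embed_pmf (\<lambda>i. if i \<in> I then clamp (u i) / mass u else 0)"

lemma mass_nonneg: "0 \<le> mass u"
  unfolding mass_def by (intro sum_nonneg clamp_nonneg)

lemma pmf_normalized:
  assumes "0 < mass u"
  shows "pmf (normalized u) i = (if i \<in> I then clamp (u i) / mass u else 0)"
  unfolding normalized_def
proof (rule pmf_embed_pmf)
  have "(\<integral>\<^sup>+ x. ennreal (if x \<in> I then clamp (u x) / mass u else 0) \<partial>count_space UNIV) =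
        (\<integral>\<^sup>+ x. ennreal (clamp (u x) / mass u) \<partial>count_space I)"
    by (subst nn_integral_count_space_indicator) (auto intro!: nn_integral_cong simp: indicator_def)
  also have "\<dots> = (\<Sum>x\<in>I. ennreal (clamp (u x) / mass u))"
    using finite_I by (simp add: nn_integral_count_space_finite)
  also have "\<dots> = ennreal (\<Sum>x\<in>I. clamp (u x) / mass u)"
    using assms by (intro sum_ennreal) (auto intro!: divide_nonneg_pos clamp_nonneg)
  also have "(\<Sum>x\<in>I. clamp (u x) / mass u) = 1"
    using assms by (simp add: sum_divide_distrib[symmetric] mass_def)
  finally show "(\<integral>\<^sup>+ x. ennreal (if x \<in> I then clamp (u x) / mass u else 0) \<partial>count_space UNIV) = 1"
    by simp
qed (use assms in \<open>auto intro!: divide_nonneg_pos clamp_nonneg\<close>)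

lemma set_pmf_normalized: "0 < mass u \<Longrightarrow> set_pmf (normalized u) \<subseteq> I"
  by (auto simp: set_pmf_iff pmf_normalized split: if_splits)

lemma pmf_poissonized_test_poisson_counts:
  assumes "0 < r" "0 < mass u"
  shows "pmf (bind_pmf (poisson_counts u) (poissonized_test I k T)) True =
         pmf (bind_pmf (replicate_pmf k (normalized u)) T) True *
         measure_pmf.prob (poisson (r * mass u)) {k..}"
proof -
  have max: "max 0 (r * clamp (u i)) = r * clamp (u i)" for i
    using assms clamp_nonneg[of "u i"] by simp
  have S: "r * mass u = (\<Sum>i\<in>I. max 0 (r * clamp (u i)))"
    by (simp add: max mass_def sum_distrib_left)
  have p: "pmf (normalized u) i = (if i \<in> I then max 0 (r * clamp (u i)) / (r * mass u) else 0)" for i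
    using assms by (simp add: pmf_normalized max)
  show ?thesis unfolding poisson_counts_def
    by (rule pmf_poissonized_test_True[OF finite_I S _ p]) (use assms in simp)
qed

end

section \<open>Accepting and rejecting the two mixtures\<close>

locale unif_mixture = poisson_mixture +
  fixes n :: nat
  assumes I_eq: "I = {1..n}" and n_pos: "0 < n" and mean_M: "(\<integral>x. x \<partial>M) = 1 / real n"
begin

lemma card_I: "card I = n"
  by (simp add: I_eq)

definition dev :: "real \<Rightarrow> real" where
  "dev x = \<bar>clamp x - 1 / real n\<bar>"

definition total_dev :: "(nat \<Rightarrow> real) \<Rightarrow> real" where
  "total_dev u = (\<Sum>i\<in>I. dev (u i))"

definition accept :: "nat \<Rightarrow> (nat list \<Rightarrow> bool pmf) \<Rightarrow> (nat \<Rightarrow> real) \<Rightarrow> real" where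
  "accept k T u = pmf (bind_pmf (poisson_counts u) (poissonized_test I k T)) True"

lemma borel_measurable_dev[measurable]: "dev \<in> borel_measurable borel"
  unfolding dev_def by measurable

lemma dev_nonneg: "0 \<le> dev x"
  by (simp add: dev_def)

lemma dev_le_width: "dev x \<le> b - a"
  using mean_in_ab clamp_bounds[of x] by (auto simp: dev_def mean_M abs_le_iff)

lemma integrable_dev: "integrable M dev"
  using dev_nonneg dev_le_width by (intro integrable_M_bounded[where B="b - a"]) auto

lemma integral_dev: "(\<integral>x. dev x \<partial>M) = (\<integral>x. \<bar>x - 1 / real n\<bar> \<partial>M)"
  unfolding dev_def by (rule integral_comp_clamp) measurable

lemma integral_dev_le_width: "(\<integral>x. dev x \<partial>M) \<le> b - a"
  using integral_mono[OF integrable_dev, of "\<lambda>_. b - a"] dev_le_width by (simp add: M.prob_space)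

lemma integral_total_dev: "(\<integral>u. total_dev u \<partial>iid) = n * (\<integral>x. dev x \<partial>M)"
  and integrable_total_dev: "integrable iid total_dev"
  unfolding total_dev_def
  using integral_sum_components[of dev "b - a"] integrable_sum_components[of dev "b - a"]
    dev_nonneg dev_le_width card_I by auto

lemma abs_mass_minus_1_le: "\<bar>mass u - 1\<bar> \<le> total_dev u"
proof -
  have "mass u - 1 = (\<Sum>i\<in>I. clamp (u i) - 1 / real n)"
    using n_pos by (simp add: mass_def sum_subtractf card_I)
  then show ?thesis
    unfolding total_dev_def dev_def by (simp only: sum_abs)
qed

lemma abs_l1_unif_normalized_minus_total_dev:
  assumes "0 < mass u"
  shows "\<bar>l1_unif n (normalized u) - total_dev u\<bar> \<le> \<bar>1 - mass u\<bar>"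
proof -
  have "l1_unif n (normalized u) = (\<Sum>i\<in>I. \<bar>clamp (u i) / mass u - 1 / real n\<bar>)"
    unfolding l1_unif_def I_eq[symmetric] using assms by (intro sum.cong) (auto simp: pmf_normalized)
  then show ?thesis
    using sum_abs_normalize_diff_le[OF clamp_nonneg mass_def assms, of "1 / real n"]
    by (simp add: total_dev_def dev_def)
qed

lemma accept_le_1: "accept k T u \<le> 1"
  by (simp add: accept_def pmf_le_1)

lemma accept_eq:
  assumes "0 < r" "0 < mass u"
  shows "accept k T u = pmf (bind_pmf (replicate_pmf k (normalized u)) T) True *
                          measure_pmf.prob (poisson (r * mass u)) {k..}"
  unfolding accept_def by (rule pmf_poissonized_test_poisson_counts[OF assms])

lemma nn_integral_accept:
  "(\<integral>\<^sup>+u. ennreal (accept k T u) \<partial>iid) =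
     ennreal (pmf (bind_pmf (Pi_pmf I 0 (\<lambda>_. mix_pmf)) (poissonized_test I k T)) True)"
  unfolding accept_def ennreal_pmf_bind nn_integral_Pi_pmf_mix_pmf ..

lemma accept_ge_if_close:
  assumes r: "200 \<le> r" and k: "real k < r / 2"
    and close: "\<And>p. set_pmf p \<subseteq> {1..n} \<Longrightarrow> l1_unif n p \<le> d \<Longrightarrow>
                   4/5 \<le> measure_pmf.prob (bind_pmf (replicate_pmf k p) T) {True}"
    and small: "total_dev u \<le> 1/10" "2 * total_dev u \<le> d"
  shows "8/11 \<le> accept k T u"
proof -
  have mass: "9/10 \<le> mass u"
    using abs_mass_minus_1_le[of u] small by linarith
  then have "0 < mass u" by linarith
  have "l1_unif n (normalized u) \<le> d"
    using abs_l1_unif_normalized_minus_total_dev[OF \<open>0 < mass u\<close>] abs_mass_minus_1_le[of u] small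
    by linarith
  then have "4/5 \<le> pmf (bind_pmf (replicate_pmf k (normalized u)) T) True"
    using close[of "normalized u"] set_pmf_normalized[OF \<open>0 < mass u\<close>] I_eq
    by (simp add: measure_pmf_single)
  moreover have "10/11 \<le> measure_pmf.prob (poisson (r * mass u)) {k..}"
    using r k mass by (intro poisson_atLeast_ge[of r]) auto
  moreover have "accept k T u = pmf (bind_pmf (replicate_pmf k (normalized u)) T) True *
                          measure_pmf.prob (poisson (r * mass u)) {k..}"
    using r \<open>0 < mass u\<close> by (intro accept_eq) auto
  ultimately have "(4/5) * (10/11) \<le> accept k T u"
    by (simp only:) (intro mult_mono, auto)
  then show ?thesis by simp
qed

lemma nn_integral_accept_ge_if_close:
  assumes r: "200 \<le> r" and k: "real k < r / 2"
    and dev: "(\<integral>x. \<bar>x - 1 / real n\<bar> \<partial>M) \<le> \<epsilon> / real n" and \<epsilon>: "0 \<le> \<epsilon>" "\<epsilon> \<le> 1/50"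
    and close: "\<And>p. set_pmf p \<subseteq> {1..n} \<Longrightarrow> l1_unif n p \<le> 25 * \<epsilon> \<Longrightarrow>
                   4/5 \<le> measure_pmf.prob (bind_pmf (replicate_pmf k p) T) {True}"
  shows "ennreal (32/55) \<le> (\<integral>\<^sup>+u. ennreal (accept k T u) \<partial>iid)"
proof -
  define \<beta> where "\<beta> = min (25 * \<epsilon> / 2) (1/10)"
  have "(\<integral>u. total_dev u \<partial>iid) \<le> real n * (\<epsilon> / real n)"
    unfolding integral_total_dev integral_dev using dev by (intro mult_left_mono) auto
  also have "\<dots> = \<epsilon>"
    using n_pos by simp
  also have "\<epsilon> \<le> 1/5 * \<beta>"
    using \<epsilon> by (simp add: \<beta>_def)
  finally have EX: "(\<integral>u. total_dev u \<partial>iid) \<le> 1/5 * \<beta>" .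
  have "8/11 \<le> accept k T u" if "total_dev u \<le> \<beta>" for u
    using that by (intro accept_ge_if_close[OF r k close]) (auto simp: \<beta>_def)
  then have "ennreal (8/11 * (1 - 1/5)) \<le> (\<integral>\<^sup>+u. ennreal (accept k T u) \<partial>iid)"
    using \<epsilon> by (intro P.nn_integral_ge_by_first_moment[OF integrable_total_dev _ EX])
       (auto simp: \<beta>_def total_dev_def dev_nonneg sum_nonneg)
  then show ?thesis by simp
qed

lemma integral_dev_square_le: "(\<integral>x. (dev x)^2 \<partial>M) \<le> (b - a) * (\<integral>x. dev x \<partial>M)"
proof -
  have "(\<integral>x. (dev x)^2 \<partial>M) \<le> (\<integral>x. (b - a) * dev x \<partial>M)"
  proof (rule integral_mono)
    show "integrable M (\<lambda>x. (dev x)^2)"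
      using dev_nonneg dev_le_width
      by (intro integrable_M_bounded[where B="(b - a)^2"]) (auto intro: power_mono)
    show "(dev x)^2 \<le> (b - a) * dev x" for x
      using dev_nonneg[of x] dev_le_width[of x] by (simp add: power2_eq_square mult_right_mono)
  qed (use integrable_dev in simp)
  then show ?thesis by simp
qed

lemma integral_square_total_dev_centred:
  "(\<integral>u. (total_dev u - n * (\<integral>x. dev x \<partial>M))^2 \<partial>iid) \<le> n * ((b - a) * (\<integral>x. dev x \<partial>M))"
proof -
  define \<mu> where "\<mu> = (\<integral>x. dev x \<partial>M)"
  have "0 \<le> \<mu>" unfolding \<mu>_def by (simp add: dev_nonneg)
  have "total_dev u - n * \<mu> = (\<Sum>i\<in>I. dev (u i) - \<mu>)" for u
    by (simp add: total_dev_def sum_subtractf card_I)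
  moreover have "(\<integral>u. (\<Sum>i\<in>I. dev (u i) - \<mu>)^2 \<partial>iid) = n * (\<integral>x. (dev x - \<mu>)^2 \<partial>M)"
  proof (rule integral_square_sum_centred[where B="b - a + \<mu>", unfolded card_I])
    show "\<bar>dev x - \<mu>\<bar> \<le> b - a + \<mu>" for x
      using dev_nonneg[of x] dev_le_width[of x] \<open>0 \<le> \<mu>\<close> by (simp add: abs_le_iff)
    show "(\<integral>x. dev x - \<mu> \<partial>M) = 0"
      using integrable_dev by (simp add: \<mu>_def M.prob_space)
  qed measurable
  moreover have "(\<integral>x. (dev x - \<mu>)^2 \<partial>M) = (\<integral>x. (dev x)^2 \<partial>M) - \<mu>^2"
  proof -
    have "(\<lambda>x. (dev x - \<mu>)^2) = (\<lambda>x. (dev x)^2 - 2 * \<mu> * dev x + \<mu>^2)"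
      by (simp add: fun_eq_iff power2_eq_square algebra_simps)
    moreover have "integrable M (\<lambda>x. (dev x)^2)"
      using dev_nonneg dev_le_width
      by (intro integrable_M_bounded[where B="(b - a)^2"]) (auto intro: power_mono)
    ultimately show ?thesis
      using integrable_dev by (simp add: M.prob_space \<mu>_def power2_eq_square)
  qed
  ultimately have "(\<integral>u. (total_dev u - n * \<mu>)^2 \<partial>iid) = n * ((\<integral>x. (dev x)^2 \<partial>M) - \<mu>^2)"
    by simp
  also have "\<dots> \<le> n * ((b - a) * \<mu>)"
  proof -
    have "(\<integral>x. (dev x)^2 \<partial>M) - \<mu>^2 \<le> (b - a) * \<mu>"
      using integral_dev_square_le zero_le_power2[of \<mu>] unfolding \<mu>_def by linarith
    then show ?thesis by (intro mult_left_mono) auto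
  qed
  finally show ?thesis by (simp add: \<mu>_def)
qed

lemma integral_square_mass_centred:
  "(\<integral>u. (mass u - 1)^2 \<partial>iid) \<le> n * ((b - a) * (\<integral>x. dev x \<partial>M))"
proof -
  define g where "g x = clamp x - 1 / real n" for x
  have "mass u - 1 = (\<Sum>i\<in>I. g (u i))" for u
    using n_pos by (simp add: g_def mass_def sum_subtractf card_I)
  moreover have "(\<integral>u. (\<Sum>i\<in>I. g (u i))^2 \<partial>iid) = n * (\<integral>x. (g x)^2 \<partial>M)"
  proof (rule integral_square_sum_centred[where B="b - a", unfolded card_I])
    show "\<bar>g x\<bar> \<le> b - a" for x
      using dev_le_width by (simp add: g_def dev_def)
    show "(\<integral>x. g x \<partial>M) = 0"
      using integrable_clamp by (simp add: g_def integral_clamp mean_M M.prob_space)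
  qed (simp add: g_def)
  ultimately have "(\<integral>u. (mass u - 1)^2 \<partial>iid) = n * (\<integral>x. (dev x)^2 \<partial>M)"
    by (simp add: g_def dev_def)
  also have "\<dots> \<le> n * ((b - a) * (\<integral>x. dev x \<partial>M))"
    using integral_dev_square_le by (intro mult_left_mono) auto
  finally show ?thesis .
qed

lemma n_mult_integral_dev_le: "n * (\<integral>x. dev x \<partial>M) \<le> 2"
proof -
  have "(\<integral>x. dev x \<partial>M) \<le> (\<integral>x. clamp x + 1 / real n \<partial>M)"
    using integrable_dev integrable_clamp clamp_nonneg
    by (intro integral_mono) (auto simp: dev_def abs_le_iff)
  also have "\<dots> = 2 / n"
    using integrable_clamp by (simp add: integral_clamp mean_M M.prob_space)
  finally show ?thesis
    using n_pos by (simp add: field_simps)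
qed

lemma integrable_square_total_dev_minus: "integrable iid (\<lambda>u. (total_dev u - c)^2)"
proof -
  have "integrable iid (\<lambda>u. (\<Sum>i\<in>I. dev (u i) - c / n)^2)"
  proof (rule integrable_square_sum_components[where B="b - a + \<bar>c\<bar> / n"])
    show "\<bar>dev x - c / n\<bar> \<le> b - a + \<bar>c\<bar> / n" for x
      using abs_triangle_ineq4[of "dev x" "c / n"] dev_nonneg[of x] dev_le_width[of x] by simp
  qed measurable
  then show ?thesis
    using n_pos by (simp add: total_dev_def sum_subtractf card_I)
qed

lemma integrable_square_mass_minus: "integrable iid (\<lambda>u. (mass u - c)^2)"
proof -
  have "integrable iid (\<lambda>u. (\<Sum>i\<in>I. clamp (u i) - c / n)^2)"
  proof (rule integrable_square_sum_components[where B="b + \<bar>c\<bar> / n"])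
    show "\<bar>clamp x - c / n\<bar> \<le> b + \<bar>c\<bar> / n" for x
      using abs_triangle_ineq4[of "clamp x" "c / n"] clamp_nonneg[of x] clamp_bounds(2)[of x] by simp
  qed measurable
  then show ?thesis
    using n_pos by (simp add: mass_def sum_subtractf card_I)
qed

lemma n_ge_if_mean_abs_dev_ge:
  assumes "\<epsilon> / n \<le> (\<integral>x. \<bar>x - 1 / real n\<bar> \<partial>M)" "0 < \<epsilon>" "b - a \<le> \<epsilon>^2 / 1000"
  shows "1000 / \<epsilon> \<le> n"
proof -
  have "(\<integral>x. \<bar>x - 1 / real n\<bar> \<partial>M) \<le> b - a"
    using integral_dev_le_width by (simp add: integral_dev)
  then have "\<epsilon> / n \<le> \<epsilon>^2 / 1000"
    using assms by linarith
  then show ?thesis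
    using assms(2) n_pos by (simp add: power2_eq_square field_simps)
qed

text \<open>Unless the tester rejects with probability \<open>4/5\<close>, the total deviation or the total mass
  is off its mean by more than \<open>s/2\<close> in total, and then the error term is at least 1.\<close>
lemma accept_le_if_far:
  assumes r: "0 < r"
    and far: "\<And>p. set_pmf p \<subseteq> {1..n} \<Longrightarrow> d \<le> l1_unif n p \<Longrightarrow>
                 4/5 \<le> measure_pmf.prob (bind_pmf (replicate_pmf k p) T) {False}"
    and s: "s = n * (\<integral>x. dev x \<partial>M)" "2 * d \<le> s" "0 < s"
  shows "accept k T u \<le> 1/5 + 8 * ((total_dev u - s)^2 + (mass u - 1)^2) / s^2"
proof (cases "0 < mass u \<and> d \<le> l1_unif n (normalized u)")
  case True
  then have "4/5 \<le> pmf (bind_pmf (replicate_pmf k (normalized u)) T) False"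
    using far[of "normalized u"] set_pmf_normalized I_eq by (simp add: measure_pmf_single)
  then have "pmf (bind_pmf (replicate_pmf k (normalized u)) T) True \<le> 1/5"
    by (simp add: pmf_True_conv_False)
  moreover have "measure_pmf.prob (poisson (r * mass u)) {k..} \<le> 1"
    by simp
  ultimately have "accept k T u \<le> 1/5 * 1"
    using True r by (simp only: accept_eq) (intro mult_mono, auto)
  moreover have "0 \<le> 8 * ((total_dev u - s)^2 + (mass u - 1)^2) / s^2"
    by simp
  ultimately show ?thesis by linarith
next
  case False
  define Y Z where "Y = total_dev u - s" and "Z = mass u - 1"
  have "s^2 \<le> 8 * (Y^2 + Z^2)"
  proof (cases "0 < mass u")
    case True
    then have "total_dev u - \<bar>1 - mass u\<bar> < d"
      using False abs_l1_unif_normalized_minus_total_dev[OF True] by (auto simp: abs_le_iff)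
    then have "s / 2 < - Y + \<bar>Z\<bar>"
      using s(2) by (simp add: Y_def Z_def abs_minus_commute)
    then have "s / 2 < \<bar>Y\<bar> + \<bar>Z\<bar>"
      using abs_ge_minus_self[of Y] by linarith
    then show ?thesis
      using square_lt_8_sum_squares[OF s(3)] by fastforce
  next
    case False
    then have "Z^2 = 1"
      using mass_nonneg[of u] by (simp add: Z_def)
    moreover have "s^2 \<le> 2^2"
      using s n_mult_integral_dev_le by (intro power_mono) auto
    ultimately have "s^2 \<le> 8 * Z^2" by simp
    also have "\<dots> \<le> 8 * (Y^2 + Z^2)" by simp
    finally show ?thesis .
  qed
  then have "1 \<le> 8 * (Y^2 + Z^2) / s^2"
    using s(3) by simp
  then show ?thesis
    using accept_le_1[of k T u] by (simp add: Y_def Z_def)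
qed

lemma nn_integral_accept_le_if_far:
  assumes r: "0 < r"
    and dev: "\<epsilon> / real n \<le> (\<integral>x. \<bar>x - 1 / real n\<bar> \<partial>M)" and \<epsilon>: "0 < \<epsilon>" "\<epsilon> \<le> 1" "b - a \<le> \<epsilon>^2 / 1000"
    and far: "\<And>p. set_pmf p \<subseteq> {1..n} \<Longrightarrow> \<epsilon> / 2 \<le> l1_unif n p \<Longrightarrow>
                 4/5 \<le> measure_pmf.prob (bind_pmf (replicate_pmf k p) T) {False}"
  shows "(\<integral>\<^sup>+u. ennreal (accept k T u) \<partial>iid) \<le> ennreal (27/125)"
proof -
  define s where "s = n * (\<integral>x. dev x \<partial>M)"
  define W where "W u = 8 * ((total_dev u - s)^2 + (mass u - 1)^2) / s^2" for u
  have "\<epsilon> \<le> s"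
    using dev n_pos by (simp add: s_def integral_dev field_simps)
  then have "0 < s" using \<epsilon> by simp
  have int: "integrable iid (\<lambda>u. (total_dev u - s)^2)" "integrable iid (\<lambda>u. (mass u - 1)^2)"
    by (rule integrable_square_total_dev_minus integrable_square_mass_minus)+
  then have intW: "integrable iid W"
    unfolding W_def by (intro integrable_divide integrable_mult_right Bochner_Integration.integrable_add)
  have "(\<integral>u. W u \<partial>iid) = 8 * ((\<integral>u. (total_dev u - s)^2 \<partial>iid) + (\<integral>u. (mass u - 1)^2 \<partial>iid)) / s^2"
    unfolding W_def using int by simp
  also have "\<dots> \<le> 8 * ((b - a) * s + (b - a) * s) / s^2"
    using integral_square_total_dev_centred integral_square_mass_centred
    unfolding s_def by (intro divide_right_mono mult_left_mono add_mono) (simp_all add: mult.left_commute)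
  also have "\<dots> = 16 * (b - a) / s"
    using \<open>0 < s\<close> by (simp add: power2_eq_square field_simps)
  also have "\<dots> \<le> 16 * (\<epsilon>^2 / 1000) / \<epsilon>"
    using \<epsilon> \<open>\<epsilon> \<le> s\<close> a_le_b by (intro frac_le mult_left_mono) auto
  also have "\<dots> \<le> 2/125"
    using \<epsilon> by (simp add: power2_eq_square)
  finally have EW: "(\<integral>u. W u \<partial>iid) \<le> 2/125" .
  have "(\<integral>\<^sup>+u. ennreal (accept k T u) \<partial>iid) \<le> (\<integral>\<^sup>+u. ennreal (1/5 + W u) \<partial>iid)"
    using accept_le_if_far[where d="\<epsilon> / 2", OF r far s_def _ \<open>0 < s\<close>] \<open>\<epsilon> \<le> s\<close>
    by (intro nn_integral_mono ennreal_leI) (simp add: W_def)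
  also have "\<dots> = ennreal (\<integral>u. 1/5 + W u \<partial>iid)"
    using intW by (intro nn_integral_eq_integral) (auto simp: W_def[abs_def] intro!: add_nonneg_nonneg)
  also have "\<dots> \<le> ennreal (27/125)"
    using EW intW by (intro ennreal_leI) (simp add: P.prob_space)
  finally show ?thesis .
qed

end

section \<open>The sample complexity bound\<close>

lemma exists_pmf_l1_unif_eq:
  assumes "2 \<le> n" "0 \<le> d" "d \<le> 1"
  obtains p where "set_pmf p \<subseteq> {1..n}" "l1_unif n p = d"
proof -
  define t where "t = d * n / (2 * (n - 1))"
  have "0 \<le> t" using assms by (simp add: t_def)
  have "d * n \<le> 1 * real n" by (rule mult_right_mono) (use assms in auto)
  moreover have "(2::real) \<le> n" using assms by simp
  ultimately have "d * n \<le> 2 * (n - 1)" by linarith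
  then have "t \<le> 1" using assms by (simp add: t_def divide_le_eq)
  define f where "f i = (if i \<in> {1..n} then (1 - t) / n + (if i = 1 then t else 0) else 0)" for i
  have f_nonneg: "0 \<le> f i" for i
    using \<open>0 \<le> t\<close> \<open>t \<le> 1\<close> by (simp add: f_def)
  have "(\<integral>\<^sup>+ i. ennreal (f i) \<partial>count_space UNIV) = (\<integral>\<^sup>+ i. ennreal (f i) \<partial>count_space {1..n})"
    by (subst nn_integral_count_space_indicator) (auto intro!: nn_integral_cong simp: indicator_def f_def)
  also have "\<dots> = ennreal (\<Sum>i\<in>{1..n}. f i)"
    by (simp add: nn_integral_count_space_finite sum_ennreal f_nonneg)
  also have "(\<Sum>i\<in>{1..n}. f i) = 1"
    using assms by (simp add: f_def sum.distrib)
  finally have pmf_p: "pmf (embed_pmf f) i = f i" for i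
    by (intro pmf_embed_pmf f_nonneg) simp
  show ?thesis
  proof
    show "set_pmf (embed_pmf f) \<subseteq> {1..n}"
      by (auto simp: set_pmf_iff pmf_p f_def split: if_splits)
    have "t / n \<le> t"
      using assms \<open>0 \<le> t\<close> mult_left_mono[of 1 "real n" t] by (simp add: divide_le_eq)
    have "{1..n} = insert 1 {2..n}" using assms by auto
    then have "l1_unif n (embed_pmf f) = \<bar>f 1 - 1 / n\<bar> + (\<Sum>i\<in>{2..n}. \<bar>f i - 1 / n\<bar>)"
      by (simp add: l1_unif_def pmf_p)
    also have "(\<Sum>i\<in>{2..n}. \<bar>f i - 1 / n\<bar>) = (\<Sum>i\<in>{2..n}. t / n)"
      using assms \<open>0 \<le> t\<close> by (intro sum.cong refl) (auto simp: f_def field_simps)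
    also have "f 1 - 1 / n = t - t / n"
      using assms by (simp add: f_def field_simps)
    also have "\<bar>t - t / n\<bar> + (\<Sum>i\<in>{2..n}. t / n) = 2 * t * (n - 1) / n"
      using assms \<open>t / n \<le> t\<close> by (simp add: of_nat_diff field_simps)
    also have "\<dots> = d"
      using assms by (simp add: t_def of_nat_diff field_simps)
    finally show "l1_unif n (embed_pmf f) = d" .
  qed
qed

lemma not_tester_ok_if_overlap:
  assumes "2 \<le> n" "0 \<le> d2" "d2 \<le> 1" "d2 \<le> d1"
  shows "\<not> tester_ok n k T d1 d2"
proof
  assume ok: "tester_ok n k T d1 d2"
  obtain p where "set_pmf p \<subseteq> {1..n}" "l1_unif n p = d2"
    using exists_pmf_l1_unif_eq assms by blast
  then have "4/5 \<le> pmf (bind_pmf (replicate_pmf k p) T) True"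
            "4/5 \<le> pmf (bind_pmf (replicate_pmf k p) T) False"
    using ok assms unfolding tester_ok_def by (auto simp: measure_pmf_single)
  then show False by (simp add: pmf_False_conv_True)
qed

lemma tester_ok_sample_bound:
  fixes M M' :: "real measure"
  assumes \<epsilon>: "0 \<le> \<epsilon>1" "\<epsilon>1 < \<epsilon>2" "\<epsilon>2 \<le> 1" and n: "0 < n" and m: "200 \<le> real m"
    and ab: "0 \<le> a" "a < b" "b - a \<le> \<epsilon>2^2 / 1000"
    and M: "prob_space M" "sets M = sets borel" "AE x in M. x \<in> {a..b}"
    and M': "prob_space M'" "sets M' = sets borel" "AE x in M'. x \<in> {a..b}"
    and mean: "(\<integral>x. x \<partial>M) = 1 / real n" "(\<integral>x. x \<partial>M') = 1 / real n"
    and dev: "(\<integral>x. \<bar>x - 1 / real n\<bar> \<partial>M) \<le> \<epsilon>1 / real n"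
      "\<epsilon>2 / real n \<le> (\<integral>x. \<bar>x - 1 / real n\<bar> \<partial>M')"
    and tv: "tv_nat (poi_mix M (real m)) (poi_mix M' (real m)) \<le> 1 / (20 * real n)"
    and ok: "tester_ok n k T (25 * \<epsilon>1) (\<epsilon>2 / 2)"
  shows "real m / 2 \<le> real k"
proof (rule ccontr)
  assume "\<not> real m / 2 \<le> real k"
  then have k: "real k < real m / 2" by simp
  interpret A: unif_mixture M "{1..n}" a b "real m" n
    using M mean ab n
    by (intro unif_mixture.intro poisson_mixture.intro iid_real.intro poisson_mixture_axioms.intro
        unif_mixture_axioms.intro) simp_all
  interpret B: unif_mixture M' "{1..n}" a b "real m" n
    using M' mean ab n
    by (intro unif_mixture.intro poisson_mixture.intro iid_real.intro poisson_mixture_axioms.intro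
        unif_mixture_axioms.intro) simp_all
  have "1000 / \<epsilon>2 \<le> n"
    using B.n_ge_if_mean_abs_dev_ge dev(2) \<epsilon> ab(3) by simp
  moreover have "1000 \<le> 1000 / \<epsilon>2"
    using \<epsilon> by (simp add: le_divide_eq)
  ultimately have "2 \<le> n" by linarith
  have "25 * \<epsilon>1 < \<epsilon>2 / 2"
  proof (rule ccontr)
    assume "\<not> 25 * \<epsilon>1 < \<epsilon>2 / 2"
    then show False
      using not_tester_ok_if_overlap[OF \<open>2 \<le> n\<close>, of "\<epsilon>2 / 2" "25 * \<epsilon>1" k T] ok \<epsilon> by simp
  qed
  have "32/55 \<le> pmf (bind_pmf (Pi_pmf {1..n} 0 (\<lambda>_. A.mix_pmf)) (poissonized_test {1..n} k T)) True"
    using ok \<open>25 * \<epsilon>1 < \<epsilon>2 / 2\<close> \<epsilon> m k dev(1) A.nn_integral_accept_ge_if_close[of k "\<epsilon>1" T]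
    unfolding tester_ok_def A.nn_integral_accept by (simp add: measure_pmf_single)
  also have "\<dots> \<le> pmf (bind_pmf (Pi_pmf {1..n} 0 (\<lambda>_. B.mix_pmf)) (poissonized_test {1..n} k T)) True + 1/10"
  proof (rule tv_le_pmf_bind)
    have "(\<Sum>j. \<bar>pmf A.mix_pmf j - pmf B.mix_pmf j\<bar>) = 2 * tv_nat (poi_mix M (real m)) (poi_mix M' (real m))"
      by (simp add: tv_nat_def A.pmf_mix_pmf B.pmf_mix_pmf)
    then have "real (card {1..n}) * (\<Sum>j. \<bar>pmf A.mix_pmf j - pmf B.mix_pmf j\<bar>) \<le> 1/10"
      using tv n by (simp add: field_simps)
    then show "tv_le (Pi_pmf {1..n} 0 (\<lambda>_. A.mix_pmf)) (Pi_pmf {1..n} 0 (\<lambda>_. B.mix_pmf)) (1/10)"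
      by (intro tv_le_mono[OF tv_le_Pi_pmf_l1]) simp_all
  qed simp
  also have "\<dots> \<le> 27/125 + 1/10"
    using ok \<epsilon> m ab dev(2) B.nn_integral_accept_le_if_far[of "\<epsilon>2" k T]
    unfolding tester_ok_def B.nn_integral_accept by (simp add: measure_pmf_single)
  finally show False by simp
qed

theorem theorem3p4:
  shows "\<exists>c::real > 0. \<forall>(\<epsilon>1::real) (\<epsilon>2::real) (n::nat) (m::nat) (a::real) (b::real)
            (M::real measure) (M'::real measure).
     0 \<le> \<epsilon>1 \<and> \<epsilon>1 < \<epsilon>2 \<and> \<epsilon>2 \<le> 1 \<and> n > 0 \<and> m > 0 \<and> real m \<ge> c \<and>
     0 \<le> a \<and> a < b \<and> b - a \<le> \<epsilon>2^2 / 1000 \<and>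
     prob_space M \<and> sets M = sets borel \<and> (AE x in M. x \<in> {a..b}) \<and>
     prob_space M' \<and> sets M' = sets borel \<and> (AE x in M'. x \<in> {a..b}) \<and>
     (\<integral>x. x \<partial>M) = 1 / real n \<and> (\<integral>x. x \<partial>M') = 1 / real n \<and>
     (\<integral>x. \<bar>x - 1 / real n\<bar> \<partial>M) \<le> \<epsilon>1 / real n \<and>
     (\<integral>x. \<bar>x - 1 / real n\<bar> \<partial>M') \<ge> \<epsilon>2 / real n \<and>
     tv_nat (poi_mix M (real m)) (poi_mix M' (real m)) \<le> 1 / (20 * real n)
     \<longrightarrow> (\<forall>(k::nat) (T::nat list \<Rightarrow> bool pmf).
            tester_ok n k T (25 * \<epsilon>1) (\<epsilon>2 / 2) \<longrightarrow> real k \<ge> real m / 2)"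
  by (intro exI[of _ "200::real"] conjI allI impI; (elim conjE)?; (rule tester_ok_sample_bound)?)
    simp_all

end
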